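(* Let $(G,u,v,\alpha,\beta)$ be a Guvab with $\lim_{k\to\infty}W_k=1$ and $\beta<1$. Then $\rho(G,u,v,\alpha,\beta)\ge\frac{d(u,v)}{2}-1$.
   Context: A Guvab is a tuple $(G,u,v,\alpha,\beta)$ where $G$ is a finite, connected, simple graph, $u,v\in V(G)$, and $\alpha,\beta\in[0,1]$ with $\alpha\le\beta$. A random walk on $G$ with starting vertex $w$ and laziness $\gamma$ is the Markov chain $R_0=w$ and, for $i\ge1$, $R_i=R_{i-1}$ with probability $\gamma$ and $R_i=t$ with probability $\frac{1-\gamma}{\deg(R_{i-1})}$ for each neighbor $t$ of $R_{i-1}$. $\mu_k$ is the distribution after $k$ steps of the walk from $u$ with laziness $\alpha$, $\nu_k$ that of the walk from $v$ with laziness $\beta$, and $W_k=W(\mu_k,\nu_k)$ is the Wasserstein ($L^1$ optimal transport) distance with respect to the graph distance $d$: the minimum over transportation plans (nonnegative $T$ on $V(G)\times V(G)$ with marginals $\mu_k,\nu_k$) of $\sum d(w_1,w_2)T(w_1,w_2)$. For a Guvab with $W_k\to1$, $\rho=\inf\{N\in\mathbb{Z}: W_k=1\text{ for all }k\ge N\}$. *)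

theory Defs
  imports "HOL-Analysis.Analysis" "HOL-Library.Extended_Real"
begin

definition fcs_graph :: "'a set \<Rightarrow> ('a \<Rightarrow> 'a \<Rightarrow> bool) \<Rightarrow> bool" where
  "fcs_graph V E \<longleftrightarrow> finite V \<and> V \<noteq> {}
     \<and> (\<forall>x y. E x y \<longrightarrow> x \<in> V \<and> y \<in> V)
     \<and> (\<forall>x. \<not> E x x) \<and> (\<forall>x y. E x y \<longrightarrow> E y x)
     \<and> (\<forall>x\<in>V. \<forall>y\<in>V. E\<^sup>*\<^sup>* x y)"

definition gdist :: "('a \<Rightarrow> 'a \<Rightarrow> bool) \<Rightarrow> 'a \<Rightarrow> 'a \<Rightarrow> nat" where
  "gdist E x y = (LEAST n. (E ^^ n) x y)"

definition gdeg :: "'a set \<Rightarrow> ('a \<Rightarrow> 'a \<Rightarrow> bool) \<Rightarrow> 'a \<Rightarrow> nat" where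
  "gdeg V E t = card {s \<in> V. E t s}"

definition trans_prob :: "'a set \<Rightarrow> ('a \<Rightarrow> 'a \<Rightarrow> bool) \<Rightarrow> real \<Rightarrow> 'a \<Rightarrow> 'a \<Rightarrow> real" where
  "trans_prob V E \<gamma> t w = (if t = w then \<gamma> else 0)
      + (if E t w then (1 - \<gamma>) / real (gdeg V E t) else 0)"

fun walk_dist :: "'a set \<Rightarrow> ('a \<Rightarrow> 'a \<Rightarrow> bool) \<Rightarrow> real \<Rightarrow> 'a \<Rightarrow> nat \<Rightarrow> 'a \<Rightarrow> real" where
  "walk_dist V E \<gamma> w0 0 = (\<lambda>w. if w = w0 then 1 else 0)"
| "walk_dist V E \<gamma> w0 (Suc k) =
     (\<lambda>w. \<Sum>t\<in>V. walk_dist V E \<gamma> w0 k t * trans_prob V E \<gamma> t w)"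

definition transport_plan :: "'a set \<Rightarrow> ('a \<Rightarrow> real) \<Rightarrow> ('a \<Rightarrow> real) \<Rightarrow> ('a \<Rightarrow> 'a \<Rightarrow> real) \<Rightarrow> bool" where
  "transport_plan V \<mu> \<nu> T \<longleftrightarrow> (\<forall>x\<in>V. \<forall>y\<in>V. T x y \<ge> 0)
     \<and> (\<forall>x\<in>V. (\<Sum>y\<in>V. T x y) = \<mu> x) \<and> (\<forall>y\<in>V. (\<Sum>x\<in>V. T x y) = \<nu> y)"

definition wasserstein :: "'a set \<Rightarrow> ('a \<Rightarrow> 'a \<Rightarrow> bool) \<Rightarrow> ('a \<Rightarrow> real) \<Rightarrow> ('a \<Rightarrow> real) \<Rightarrow> real" where
  "wasserstein V E \<mu> \<nu> = Inf {(\<Sum>x\<in>V. \<Sum>y\<in>V. real (gdist E x y) * T x y) | T. transport_plan V \<mu> \<nu> T}"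

definition W_seq :: "'a set \<Rightarrow> ('a \<Rightarrow> 'a \<Rightarrow> bool) \<Rightarrow> 'a \<Rightarrow> 'a \<Rightarrow> real \<Rightarrow> real \<Rightarrow> nat \<Rightarrow> real" where
  "W_seq V E u v \<alpha> \<beta> k = wasserstein V E (walk_dist V E \<alpha> u k) (walk_dist V E \<beta> v k)"

text \<open>\<rho>: infimum of the N (ranging over step indices, i.e. naturals) with W_k = 1 for all k \<ge> N;
  taken in the extended reals, so the infimum of the empty set is \<infinity>.\<close>
definition rho :: "'a set \<Rightarrow> ('a \<Rightarrow> 'a \<Rightarrow> bool) \<Rightarrow> 'a \<Rightarrow> 'a \<Rightarrow> real \<Rightarrow> real \<Rightarrow> ereal" where
  "rho V E u v \<alpha> \<beta> = Inf {ereal (real N) | N::nat. \<forall>k\<ge>N. W_seq V E u v \<alpha> \<beta> k = 1}"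

definition guvab :: "'a set \<Rightarrow> ('a \<Rightarrow> 'a \<Rightarrow> bool) \<Rightarrow> 'a \<Rightarrow> 'a \<Rightarrow> real \<Rightarrow> real \<Rightarrow> bool" where
  "guvab V E u v \<alpha> \<beta> \<longleftrightarrow> fcs_graph V E \<and> u \<in> V \<and> v \<in> V
     \<and> 0 \<le> \<alpha> \<and> \<alpha> \<le> \<beta> \<and> \<beta> \<le> 1"

end

theory Submission
  imports Defs
begin

text \<open>After k steps the walk from u is supported within distance k of u, and the
  walk from v within distance k of v. Hence any transportation plan moves all mass
  over distance at least d(u,v) - 2k, so W_k \<ge> d(u,v) - 2k. If W_k = 1 for
  all k \<ge> N, then in particular 1 = W_N \<ge> d(u,v) - 2N, which gives
  N \<ge> d(u,v)/2 - 1/2.\<close>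

lemma relpowp_sym:
  assumes sym: "symp E" and "(E ^^ n) x y"
  shows "(E ^^ n) y x"
  using assms(2)
proof (induction n arbitrary: y)
  case 0
  then show ?case by simp
next
  case (Suc n)
  from Suc.prems obtain z where "(E ^^ n) x z" "E z y" by (rule relpowp_Suc_E)
  from sym \<open>E z y\<close> have "E y z" by (rule sympD)
  then show ?case using Suc.IH[OF \<open>(E ^^ n) x z\<close>] by (rule relpowp_Suc_I2)
qed

lemma gdist_le_relpowp: "(E ^^ n) x y \<Longrightarrow> gdist E x y \<le> n"
  unfolding gdist_def by (rule Least_le)

lemma relpowp_gdist: "E\<^sup>*\<^sup>* x y \<Longrightarrow> (E ^^ gdist E x y) x y"
  unfolding gdist_def rtranclp_power by (rule LeastI_ex)

lemma gdist_le_via: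
  assumes sym: "symp E" and "E\<^sup>*\<^sup>* x y"
    and "(E ^^ a) u x" and "(E ^^ c) v y"
  shows "gdist E u v \<le> a + gdist E x y + c"
proof -
  have "(E ^^ (a + gdist E x y)) u y"
    using assms(3) relpowp_gdist[OF assms(2)] by (rule relpowp_trans)
  then have "(E ^^ (a + gdist E x y + c)) u v"
    using relpowp_sym[OF sym assms(4)] by (rule relpowp_trans)
  then show ?thesis by (rule gdist_le_relpowp)
qed

lemma fcs_graph_gdeg_pos:
  assumes g: "fcs_graph V E" and t: "t \<in> V" and "\<exists>y\<in>V. y \<noteq> t"
  shows "gdeg V E t > 0"
proof -
  obtain y where y: "y \<in> V" "y \<noteq> t" using assms(3) by blast
  then have "E\<^sup>*\<^sup>* t y" using g t unfolding fcs_graph_def by auto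
  then obtain z where "E t z" using y(2) by (metis converse_rtranclpE)
  then have "z \<in> {s \<in> V. E t s}" using g unfolding fcs_graph_def by auto
  moreover have "finite V" using g unfolding fcs_graph_def by auto
  ultimately show ?thesis unfolding gdeg_def by (auto simp: card_gt_0_iff)
qed

lemma sum_trans_prob_eq_1:
  assumes "finite V" "t \<in> V" "gdeg V E t > 0"
  shows "(\<Sum>w\<in>V. trans_prob V E \<gamma> t w) = 1"
proof -
  have "(\<Sum>w\<in>V. trans_prob V E \<gamma> t w) = (\<Sum>w\<in>V. (if t = w then \<gamma> else 0))
     + (\<Sum>w\<in>V. (if E t w then (1 - \<gamma>) / real (gdeg V E t) else 0))"
    unfolding trans_prob_def by (simp add: sum.distrib)
  also have "(\<Sum>w\<in>V. (if t = w then \<gamma> else 0)) = \<gamma>" using assms by simp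
  also have "(\<Sum>w\<in>V. (if E t w then (1 - \<gamma>) / real (gdeg V E t) else 0))
     = real (gdeg V E t) * ((1 - \<gamma>) / real (gdeg V E t))"
    using assms(1) by (simp add: sum.If_cases gdeg_def Int_def conj_commute)
  also have "\<dots> = 1 - \<gamma>" using assms(3) by simp
  finally show ?thesis by simp
qed

lemma walk_dist_sum_eq_1:
  assumes "finite V" "w0 \<in> V" "\<forall>t\<in>V. gdeg V E t > 0"
  shows "(\<Sum>w\<in>V. walk_dist V E \<gamma> w0 k w) = 1"
proof (induction k)
  case 0
  then show ?case using assms by simp
next
  case (Suc k)
  have "(\<Sum>w\<in>V. walk_dist V E \<gamma> w0 (Suc k) w)
     = (\<Sum>t\<in>V. walk_dist V E \<gamma> w0 k t * (\<Sum>w\<in>V. trans_prob V E \<gamma> t w))"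
    by (simp only: walk_dist.simps sum_distrib_left) (rule sum.swap)
  also have "\<dots> = (\<Sum>t\<in>V. walk_dist V E \<gamma> w0 k t)"
    using sum_trans_prob_eq_1[OF assms(1)] assms(3) by (intro sum.cong) simp_all
  finally show ?case using Suc by simp
qed

lemma walk_dist_nonneg:
  assumes "0 \<le> \<gamma>" "\<gamma> \<le> 1"
  shows "walk_dist V E \<gamma> w0 k w \<ge> 0"
proof (induction k arbitrary: w)
  case 0
  then show ?case by simp
next
  case (Suc k)
  have "\<And>t. trans_prob V E \<gamma> t w \<ge> 0" using assms unfolding trans_prob_def by auto
  then show ?case using Suc by (simp add: sum_nonneg)
qed

lemma walk_dist_nonzero_imp_relpowp:
  "walk_dist V E \<gamma> w0 k x \<noteq> 0 \<Longrightarrow> \<exists>n\<le>k. (E ^^ n) w0 x"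
proof (induction k arbitrary: x)
  case 0
  then show ?case by (auto split: if_splits)
next
  case (Suc k)
  have "(\<Sum>t\<in>V. walk_dist V E \<gamma> w0 k t * trans_prob V E \<gamma> t x) \<noteq> 0"
    using Suc.prems by simp
  then obtain t where "walk_dist V E \<gamma> w0 k t * trans_prob V E \<gamma> t x \<noteq> 0"
    by (meson sum.neutral)
  then have t: "walk_dist V E \<gamma> w0 k t \<noteq> 0" "trans_prob V E \<gamma> t x \<noteq> 0" by simp_all
  then obtain n where n: "n \<le> k" "(E ^^ n) w0 t" using Suc.IH by blast
  have "t = x \<or> E t x" using t(2) unfolding trans_prob_def by (auto split: if_splits)
  then show ?case
  proof
    assume "t = x"
    then show ?case using n le_SucI by blast
  next
    assume "E t x"
    then have "(E ^^ Suc n) w0 x" by (rule relpowp_Suc_I[OF n(2)])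
    then show ?case using n(1) Suc_le_mono by blast
  qed
qed

lemma transport_plan_nonzero_marginals:
  assumes fin: "finite V" and T: "transport_plan V \<mu> \<nu> T"
    and xy: "x \<in> V" "y \<in> V" and "T x y \<noteq> 0"
  shows "\<mu> x \<noteq> 0" "\<nu> y \<noteq> 0"
proof -
  have nonneg: "\<forall>x\<in>V. \<forall>y\<in>V. T x y \<ge> 0" using T unfolding transport_plan_def by blast
  have "(\<Sum>y'\<in>V. T x y') \<noteq> 0"
    using sum_nonneg_eq_0_iff[OF fin, of "T x"] nonneg xy \<open>T x y \<noteq> 0\<close> by auto
  then show "\<mu> x \<noteq> 0" using T xy unfolding transport_plan_def by auto
  have "(\<Sum>x'\<in>V. T x' y) \<noteq> 0"
    using sum_nonneg_eq_0_iff[OF fin, of "\<lambda>x'. T x' y"] nonneg xy \<open>T x y \<noteq> 0\<close> by auto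
  then show "\<nu> y \<noteq> 0" using T xy unfolding transport_plan_def by auto
qed

lemma transport_plan_product:
  assumes "finite V" "\<forall>x\<in>V. \<mu> x \<ge> 0" "\<forall>y\<in>V. \<nu> y \<ge> 0"
    and "(\<Sum>x\<in>V. \<mu> x) = 1" "(\<Sum>y\<in>V. \<nu> y) = 1"
  shows "transport_plan V \<mu> \<nu> (\<lambda>x y. \<mu> x * \<nu> y)"
  using assms unfolding transport_plan_def
  by (simp add: sum_distrib_left[symmetric] sum_distrib_right[symmetric])

lemma transport_cost_ge_support_distance:
  assumes fin: "finite V" and T: "transport_plan V \<mu> \<nu> T" and mass: "(\<Sum>x\<in>V. \<mu> x) = 1"
    and far: "\<forall>x\<in>V. \<forall>y\<in>V. \<mu> x \<noteq> 0 \<longrightarrow> \<nu> y \<noteq> 0 \<longrightarrow> c \<le> real (gdist E x y)"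
  shows "c \<le> (\<Sum>x\<in>V. \<Sum>y\<in>V. real (gdist E x y) * T x y)"
proof -
  have "c * T x y \<le> real (gdist E x y) * T x y" if xy: "x \<in> V" "y \<in> V" for x y
  proof (cases "T x y = 0")
    case False
    then have "c \<le> real (gdist E x y)"
      using far xy transport_plan_nonzero_marginals[OF fin T xy] by blast
    moreover have "T x y \<ge> 0" using T xy unfolding transport_plan_def by blast
    ultimately show ?thesis by (rule mult_right_mono)
  qed simp
  then have "(\<Sum>x\<in>V. \<Sum>y\<in>V. c * T x y) \<le> (\<Sum>x\<in>V. \<Sum>y\<in>V. real (gdist E x y) * T x y)"
    by (intro sum_mono) blast
  also have "(\<Sum>x\<in>V. \<Sum>y\<in>V. c * T x y) = (\<Sum>x\<in>V. c * \<mu> x)"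
    using T unfolding transport_plan_def by (simp add: sum_distrib_left[symmetric])
  finally show ?thesis using mass by (simp add: sum_distrib_left[symmetric])
qed

lemma wasserstein_ge_support_distance:
  assumes fin: "finite V" and "\<forall>x\<in>V. \<mu> x \<ge> 0" "\<forall>y\<in>V. \<nu> y \<ge> 0"
    and mass: "(\<Sum>x\<in>V. \<mu> x) = 1" "(\<Sum>y\<in>V. \<nu> y) = 1"
    and far: "\<forall>x\<in>V. \<forall>y\<in>V. \<mu> x \<noteq> 0 \<longrightarrow> \<nu> y \<noteq> 0 \<longrightarrow> c \<le> real (gdist E x y)"
  shows "c \<le> wasserstein V E \<mu> \<nu>"
  unfolding wasserstein_def
proof (rule cInf_greatest)
  show "{\<Sum>x\<in>V. \<Sum>y\<in>V. real (gdist E x y) * T x y | T. transport_plan V \<mu> \<nu> T} \<noteq> {}"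
    using transport_plan_product[OF assms(1-5)] by blast
qed (use transport_cost_ge_support_distance[OF fin _ mass(1) far] in blast)

lemma W_seq_lower_bound:
  assumes g: "guvab V E u v \<alpha> \<beta>" and "u \<noteq> v"
  shows "real (gdist E u v) - 2 * real k \<le> W_seq V E u v \<alpha> \<beta> k"
proof -
  have gr: "fcs_graph V E" "u \<in> V" "v \<in> V" "0 \<le> \<alpha>" "\<alpha> \<le> \<beta>" "\<beta> \<le> 1"
    using g unfolding guvab_def by auto
  have fin: "finite V" and conn: "\<forall>x\<in>V. \<forall>y\<in>V. E\<^sup>*\<^sup>* x y"
    using gr(1) unfolding fcs_graph_def by blast+
  have sym: "symp E" using gr(1) unfolding fcs_graph_def by (blast intro: sympI)
  have deg: "\<forall>t\<in>V. gdeg V E t > 0"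
  proof
    fix t assume "t \<in> V"
    moreover have "\<exists>y\<in>V. y \<noteq> t" using gr(2,3) \<open>u \<noteq> v\<close> by (cases "t = u") auto
    ultimately show "gdeg V E t > 0" by (rule fcs_graph_gdeg_pos[OF gr(1)])
  qed
  have far: "real (gdist E u v) - 2 * real k \<le> real (gdist E x y)"
    if xy: "x \<in> V" "y \<in> V" and "walk_dist V E \<alpha> u k x \<noteq> 0" "walk_dist V E \<beta> v k y \<noteq> 0"
    for x y
  proof -
    obtain a where a: "a \<le> k" "(E ^^ a) u x"
      using walk_dist_nonzero_imp_relpowp[OF \<open>walk_dist V E \<alpha> u k x \<noteq> 0\<close>] by blast
    obtain c where c: "c \<le> k" "(E ^^ c) v y"
      using walk_dist_nonzero_imp_relpowp[OF \<open>walk_dist V E \<beta> v k y \<noteq> 0\<close>] by blast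
    have "E\<^sup>*\<^sup>* x y" using conn xy by blast
    then have "gdist E u v \<le> a + gdist E x y + c" using sym a(2) c(2) by (intro gdist_le_via)
    then show ?thesis using a(1) c(1) by linarith
  qed
  have "\<forall>x\<in>V. walk_dist V E \<alpha> u k x \<ge> 0" "\<forall>y\<in>V. walk_dist V E \<beta> v k y \<ge> 0"
    using walk_dist_nonneg[of \<alpha>] walk_dist_nonneg[of \<beta>] gr(4-6) by auto
  moreover have "(\<Sum>x\<in>V. walk_dist V E \<alpha> u k x) = 1" "(\<Sum>y\<in>V. walk_dist V E \<beta> v k y) = 1"
    using walk_dist_sum_eq_1[OF fin _ deg] gr(2,3) by simp_all
  ultimately show ?thesis
    unfolding W_seq_def using far by (intro wasserstein_ge_support_distance[OF fin]) blast+
qed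

theorem lemma4p14:
  fixes V :: "'a set" and E :: "'a \<Rightarrow> 'a \<Rightarrow> bool" and u v :: 'a and \<alpha> \<beta> :: real
  assumes "guvab V E u v \<alpha> \<beta>"
    and "W_seq V E u v \<alpha> \<beta> \<longlonglongrightarrow> 1"
    and "\<beta> < 1"
  shows "rho V E u v \<alpha> \<beta> \<ge> ereal (real (gdist E u v) / 2 - 1)"
  unfolding rho_def
proof (rule Inf_greatest, clarify)
  fix N :: nat
  assume N: "\<forall>k\<ge>N. W_seq V E u v \<alpha> \<beta> k = 1"
  show "ereal (real (gdist E u v) / 2 - 1) \<le> ereal (real N)"
  proof (cases "u = v")
    case True
    then have "gdist E u v = 0" using gdist_le_relpowp[of 0 E u u] by simp
    then show ?thesis by simp
  next
    case False
    then show ?thesis using W_seq_lower_bound[OF assms(1) False, of N] N by simp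
  qed
qed

end
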